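(* Let $(l_1:l_2:l_3:l_4)$ be a point on the tetragonal surface $\mathcal{K}^{\mathrm{Tet}}$ (over an algebraic closure of the base field). Then $K_2(l_1,l_2,l_3)=K_3(l_1,l_2,l_3)=K_4(l_1,l_2,l_3)=0$ if and only if $l_1=l_2=l_3=0$.
   Context: Let $k$ be a field of characteristic $\neq2,3$ and $\mu_1,\dots,\mu_4\in k$ nonzero squared theta constants with $\hat\mu_1=(\mu_1+\mu_2+\mu_3+\mu_4)/2$, $\hat\mu_2=(\mu_1+\mu_2-\mu_3-\mu_4)/2$, $\hat\mu_3=(\mu_1-\mu_2+\mu_3-\mu_4)/2$, $\hat\mu_4=(\mu_1-\mu_2-\mu_3+\mu_4)/2$ all nonzero, and $\mu_1\mu_4\neq\mu_2\mu_3$, $\mu_1\mu_3\neq\mu_2\mu_4$, $\mu_1\mu_2\neq\mu_3\mu_4$ (so that the associated squared Kummer surface is a genuine Kummer surface of a genus-2 Jacobian). Set $t=16\mu_1\mu_2\mu_3\mu_4\hat\mu_1\hat\mu_2\hat\mu_3\hat\mu_4$ and $r_1=(\mu_1\mu_3-\mu_2\mu_4)(\mu_1\mu_4-\mu_2\mu_3)$, $s_1=(\mu_1\mu_2-\mu_3\mu_4)(\mu_1\mu_2+\mu_3\mu_4)$, $r_2=(\mu_1\mu_2-\mu_3\mu_4)(\mu_1\mu_4-\mu_2\mu_3)$, $s_2=(\mu_1\mu_3-\mu_2\mu_4)(\mu_1\mu_3+\mu_2\mu_4)$, $r_3=(\mu_1\mu_2-\mu_3\mu_4)(\mu_1\mu_3-\mu_2\mu_4)$,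 $s_3=(\mu_1\mu_4-\mu_2\mu_3)(\mu_1\mu_4+\mu_2\mu_3)$. The tetragonal surface $\mathcal{K}^{\mathrm{Tet}}\subset\mathbb{P}^3$ is $4tL_1L_2L_3L_4=r_1^2(L_1L_2+L_3L_4)^2+r_2^2(L_1L_3+L_2L_4)^2+r_3^2(L_1L_4+L_2L_3)^2-2r_1s_1((L_1^2+L_2^2)L_3L_4+L_1L_2(L_3^2+L_4^2))-2r_2s_2((L_1^2+L_3^2)L_2L_4+L_1L_3(L_2^2+L_4^2))-2r_3s_3((L_1^2+L_4^2)L_2L_3+L_1L_4(L_2^2+L_3^2))$, which can be rewritten as $K_4-2K_3L_4+K_2L_4^2=0$ with $K_2=r_3^2L_1^2+r_2^2L_2^2+r_1^2L_3^2-2(r_3s_3L_2L_3+r_2s_2L_1L_3+r_1s_1L_1L_2)$, $K_3=r_1s_1(L_1^2+L_2^2)L_3+r_2s_2(L_1^2+L_3^2)L_2+r_3s_3(L_2^2+L_3^2)L_1+(2t-(r_1^2+r_2^2+r_3^2))L_1L_2L_3$, $K_4=r_3^2L_2^2L_3^2+r_2^2L_1^2L_3^2+r_1^2L_1^2L_2^2-2(r_3s_3L_1+r_2s_2L_2+r_1s_1L_3)L_1L_2L_3$. The vanishing of the homogeneous $K_i$ at a projective point does not depend on the representative. *)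

theory Defs
  imports "HOL-Computational_Algebra.Polynomial"
begin

definition hmu1 :: "'a::field \<Rightarrow> 'a \<Rightarrow> 'a \<Rightarrow> 'a \<Rightarrow> 'a" where
  "hmu1 m1 m2 m3 m4 = (m1 + m2 + m3 + m4) / 2"
definition hmu2 :: "'a::field \<Rightarrow> 'a \<Rightarrow> 'a \<Rightarrow> 'a \<Rightarrow> 'a" where
  "hmu2 m1 m2 m3 m4 = (m1 + m2 - m3 - m4) / 2"
definition hmu3 :: "'a::field \<Rightarrow> 'a \<Rightarrow> 'a \<Rightarrow> 'a \<Rightarrow> 'a" where
  "hmu3 m1 m2 m3 m4 = (m1 - m2 + m3 - m4) / 2"
definition hmu4 :: "'a::field \<Rightarrow> 'a \<Rightarrow> 'a \<Rightarrow> 'a \<Rightarrow> 'a" where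
  "hmu4 m1 m2 m3 m4 = (m1 - m2 - m3 + m4) / 2"

definition tT :: "'a::field \<Rightarrow> 'a \<Rightarrow> 'a \<Rightarrow> 'a \<Rightarrow> 'a" where
  "tT m1 m2 m3 m4 = 16 * m1 * m2 * m3 * m4 * hmu1 m1 m2 m3 m4 * hmu2 m1 m2 m3 m4
      * hmu3 m1 m2 m3 m4 * hmu4 m1 m2 m3 m4"

definition r1 :: "'a::field \<Rightarrow> 'a \<Rightarrow> 'a \<Rightarrow> 'a \<Rightarrow> 'a" where
  "r1 m1 m2 m3 m4 = (m1*m3 - m2*m4) * (m1*m4 - m2*m3)"
definition s1 :: "'a::field \<Rightarrow> 'a \<Rightarrow> 'a \<Rightarrow> 'a \<Rightarrow> 'a" where
  "s1 m1 m2 m3 m4 = (m1*m2 - m3*m4) * (m1*m2 + m3*m4)"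
definition r2 :: "'a::field \<Rightarrow> 'a \<Rightarrow> 'a \<Rightarrow> 'a \<Rightarrow> 'a" where
  "r2 m1 m2 m3 m4 = (m1*m2 - m3*m4) * (m1*m4 - m2*m3)"
definition s2 :: "'a::field \<Rightarrow> 'a \<Rightarrow> 'a \<Rightarrow> 'a \<Rightarrow> 'a" where
  "s2 m1 m2 m3 m4 = (m1*m3 - m2*m4) * (m1*m3 + m2*m4)"
definition r3 :: "'a::field \<Rightarrow> 'a \<Rightarrow> 'a \<Rightarrow> 'a \<Rightarrow> 'a" where
  "r3 m1 m2 m3 m4 = (m1*m2 - m3*m4) * (m1*m3 - m2*m4)"
definition s3 :: "'a::field \<Rightarrow> 'a \<Rightarrow> 'a \<Rightarrow> 'a \<Rightarrow> 'a" where
  "s3 m1 m2 m3 m4 = (m1*m4 - m2*m3) * (m1*m4 + m2*m3)"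

definition on_KTet :: "'a::field \<Rightarrow> 'a \<Rightarrow> 'a \<Rightarrow> 'a \<Rightarrow> 'a \<Rightarrow> 'a \<Rightarrow> 'a \<Rightarrow> 'a \<Rightarrow> bool" where
  "on_KTet m1 m2 m3 m4 L1 L2 L3 L4 \<longleftrightarrow>
    (let t = tT m1 m2 m3 m4;
         R1 = r1 m1 m2 m3 m4; S1 = s1 m1 m2 m3 m4;
         R2 = r2 m1 m2 m3 m4; S2 = s2 m1 m2 m3 m4;
         R3 = r3 m1 m2 m3 m4; S3 = s3 m1 m2 m3 m4
     in 4 * t * L1 * L2 * L3 * L4 =
        R1^2 * (L1*L2 + L3*L4)^2 + R2^2 * (L1*L3 + L2*L4)^2 + R3^2 * (L1*L4 + L2*L3)^2
        - 2 * R1 * S1 * ((L1^2 + L2^2) * L3 * L4 + L1 * L2 * (L3^2 + L4^2))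
        - 2 * R2 * S2 * ((L1^2 + L3^2) * L2 * L4 + L1 * L3 * (L2^2 + L4^2))
        - 2 * R3 * S3 * ((L1^2 + L4^2) * L2 * L3 + L1 * L4 * (L2^2 + L3^2)))"

definition K2 :: "'a::field \<Rightarrow> 'a \<Rightarrow> 'a \<Rightarrow> 'a \<Rightarrow> 'a \<Rightarrow> 'a \<Rightarrow> 'a \<Rightarrow> 'a" where
  "K2 m1 m2 m3 m4 L1 L2 L3 =
    (let R1 = r1 m1 m2 m3 m4; S1 = s1 m1 m2 m3 m4;
         R2 = r2 m1 m2 m3 m4; S2 = s2 m1 m2 m3 m4;
         R3 = r3 m1 m2 m3 m4; S3 = s3 m1 m2 m3 m4
     in R3^2 * L1^2 + R2^2 * L2^2 + R1^2 * L3^2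
        - 2 * (R3 * S3 * L2 * L3 + R2 * S2 * L1 * L3 + R1 * S1 * L1 * L2))"

definition K3 :: "'a::field \<Rightarrow> 'a \<Rightarrow> 'a \<Rightarrow> 'a \<Rightarrow> 'a \<Rightarrow> 'a \<Rightarrow> 'a \<Rightarrow> 'a" where
  "K3 m1 m2 m3 m4 L1 L2 L3 =
    (let t = tT m1 m2 m3 m4;
         R1 = r1 m1 m2 m3 m4; S1 = s1 m1 m2 m3 m4;
         R2 = r2 m1 m2 m3 m4; S2 = s2 m1 m2 m3 m4;
         R3 = r3 m1 m2 m3 m4; S3 = s3 m1 m2 m3 m4
     in R1 * S1 * (L1^2 + L2^2) * L3 + R2 * S2 * (L1^2 + L3^2) * L2
        + R3 * S3 * (L2^2 + L3^2) * L1
        + (2 * t - (R1^2 + R2^2 + R3^2)) * L1 * L2 * L3)"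

definition K4 :: "'a::field \<Rightarrow> 'a \<Rightarrow> 'a \<Rightarrow> 'a \<Rightarrow> 'a \<Rightarrow> 'a \<Rightarrow> 'a \<Rightarrow> 'a" where
  "K4 m1 m2 m3 m4 L1 L2 L3 =
    (let R1 = r1 m1 m2 m3 m4; S1 = s1 m1 m2 m3 m4;
         R2 = r2 m1 m2 m3 m4; S2 = s2 m1 m2 m3 m4;
         R3 = r3 m1 m2 m3 m4; S3 = s3 m1 m2 m3 m4
     in R3^2 * L2^2 * L3^2 + R2^2 * L1^2 * L3^2 + R1^2 * L1^2 * L2^2
        - 2 * (R3 * S3 * L1 + R2 * S2 * L2 + R1 * S1 * L3) * L1 * L2 * L3)"

end

theory Submission
  imports Defs
begin

(*
  Since K3^2 - K2 K4 factors as a nonzero constant times three binary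
  quadratic forms Q, any common zero lies on one of the conics Q = 0. There K2 and K4 become
  perfect squares, and a syzygy between their square roots and Q forces the product of the
  two variables of Q to vanish, which together with Q = 0 kills them; the remaining variable
  is then zero because the square root of K2 is linear in it. The three conics are exchanged
  by the symmetries (mu2 <-> mu3, l2 <-> l3) and (mu3 <-> mu4, l1 <-> l2) of K2 and K4, so
  only one of them needs to be treated.
*)

definition generic_theta :: "'a::field \<Rightarrow> 'a \<Rightarrow> 'a \<Rightarrow> 'a \<Rightarrow> bool" where
  "generic_theta m1 m2 m3 m4 \<longleftrightarrow>
     m1 * m2 * m3 * m4 \<noteq> 0
   \<and> (m1 + m2 + m3 + m4) * (m1 + m2 - m3 - m4) * (m1 - m2 + m3 - m4) * (m1 - m2 - m3 + m4) \<noteq> 0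
   \<and> (m1 * m2 - m3 * m4) * (m1 * m3 - m2 * m4) * (m1 * m4 - m2 * m3) \<noteq> 0"

definition Q :: "'a::field \<Rightarrow> 'a \<Rightarrow> 'a \<Rightarrow> 'a \<Rightarrow> 'a \<Rightarrow> 'a \<Rightarrow> 'a" where
  "Q m1 m2 m3 m4 x y =
     (m1 * m4 - m2 * m3) * x^2 + (m1^2 + m4^2 - m2^2 - m3^2) * x * y + (m1 * m4 - m2 * m3) * y^2"

lemma generic_theta_swap23: "generic_theta m1 m3 m2 m4 = generic_theta m1 m2 m3 m4"
proof -
  have "m1 * m3 * m2 * m4 = m1 * m2 * m3 * m4"
   and "(m1 + m3 + m2 + m4) * (m1 + m3 - m2 - m4) * (m1 - m3 + m2 - m4) * (m1 - m3 - m2 + m4)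
      = (m1 + m2 + m3 + m4) * (m1 + m2 - m3 - m4) * (m1 - m2 + m3 - m4) * (m1 - m2 - m3 + m4)"
   and "(m1 * m3 - m2 * m4) * (m1 * m2 - m3 * m4) * (m1 * m4 - m3 * m2)
      = (m1 * m2 - m3 * m4) * (m1 * m3 - m2 * m4) * (m1 * m4 - m2 * m3)"
    by algebra+
  then show ?thesis
    unfolding generic_theta_def by (simp only:)
qed

lemma generic_theta_swap34: "generic_theta m1 m2 m4 m3 = generic_theta m1 m2 m3 m4"
proof -
  have "m1 * m2 * m4 * m3 = m1 * m2 * m3 * m4"
   and "(m1 + m2 + m4 + m3) * (m1 + m2 - m4 - m3) * (m1 - m2 + m4 - m3) * (m1 - m2 - m4 + m3)
      = (m1 + m2 + m3 + m4) * (m1 + m2 - m3 - m4) * (m1 - m2 + m3 - m4) * (m1 - m2 - m3 + m4)"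
   and "(m1 * m2 - m4 * m3) * (m1 * m4 - m2 * m3) * (m1 * m3 - m2 * m4)
      = (m1 * m2 - m3 * m4) * (m1 * m3 - m2 * m4) * (m1 * m4 - m2 * m3)"
    by algebra+
  then show ?thesis
    unfolding generic_theta_def by (simp only:)
qed

lemma K2_swap23: "K2 m1 m3 m2 m4 l1 l3 l2 = K2 m1 m2 m3 m4 l1 l2 l3"
  unfolding K2_def Let_def r1_def r2_def r3_def s1_def s2_def s3_def by algebra

lemma K4_swap23: "K4 m1 m3 m2 m4 l1 l3 l2 = K4 m1 m2 m3 m4 l1 l2 l3"
  unfolding K4_def Let_def r1_def r2_def r3_def s1_def s2_def s3_def by algebra

lemma K2_swap34: "K2 m1 m2 m4 m3 l2 l1 l3 = K2 m1 m2 m3 m4 l1 l2 l3"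
  unfolding K2_def Let_def r1_def r2_def r3_def s1_def s2_def s3_def by algebra

lemma K4_swap34: "K4 m1 m2 m4 m3 l2 l1 l3 = K4 m1 m2 m3 m4 l1 l2 l3"
  unfolding K4_def Let_def r1_def r2_def r3_def s1_def s2_def s3_def by algebra

lemma tT_eq_product:
  fixes m1 m2 m3 m4 :: "'a::field"
  assumes "(2::'a) \<noteq> 0"
  shows "tT m1 m2 m3 m4 = m1 * m2 * m3 * m4
    * ((m1 + m2 + m3 + m4) * (m1 + m2 - m3 - m4) * (m1 - m2 + m3 - m4) * (m1 - m2 - m3 + m4))"
proof -
  have "(16::'a) \<noteq> 0"
    using assms power_not_zero[of 2 4] by simp
  then show ?thesis
    unfolding tT_def hmu1_def hmu2_def hmu3_def hmu4_def by (simp add: field_simps)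
qed

lemma K3_square_minus_K2_K4:
  fixes m1 m2 m3 m4 l1 l2 l3 :: "'a::field"
  assumes "(2::'a) \<noteq> 0"
  shows "K3 m1 m2 m3 m4 l1 l2 l3 ^ 2 - K2 m1 m2 m3 m4 l1 l2 l3 * K4 m1 m2 m3 m4 l1 l2 l3
    = 4 * (m1 * m2 * m3 * m4) * ((m1 * m2 - m3 * m4) * (m1 * m3 - m2 * m4) * (m1 * m4 - m2 * m3))
      * Q m1 m2 m3 m4 l2 l3 * Q m1 m2 m4 m3 l1 l3 * Q m1 m3 m4 m2 l1 l2"
  unfolding K2_def K3_def K4_def Let_def tT_eq_product[OF assms] Q_def
    r1_def r2_def r3_def s1_def s2_def s3_def
  by algebra

lemma K2_K4_zero_on_Q_imp_zero:
  fixes m1 m2 m3 m4 l1 l2 l3 :: "'a::field"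
  assumes generic: "generic_theta m1 m2 m3 m4"
    and K2: "K2 m1 m2 m3 m4 l1 l2 l3 = 0" and K4: "K4 m1 m2 m3 m4 l1 l2 l3 = 0"
    and Q: "Q m1 m2 m3 m4 l2 l3 = 0"
  shows "l1 = 0 \<and> l2 = 0 \<and> l3 = 0"
proof -
  define P where "P = m1 * m2 * m3 * m4"
  define H where "H = (m1 + m2 + m3 + m4) * (m1 + m2 - m3 - m4) * (m1 - m2 + m3 - m4)
    * (m1 - m2 - m3 + m4)"
  define A where "A = m1 * m2 - m3 * m4"
  define C where "C = m1 * m3 - m2 * m4"
  define E where "E = m1 * m4 - m2 * m3"
  define a' where "a' = m1 * m2 + m3 * m4"
  define c' where "c' = m1 * m3 + m2 * m4"
  define W where "W = A * C * l1 - E * (a' * l2 + c' * l3)"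
  define W' where "W' = A * C * l2 * l3 - E * l1 * (a' * l3 + c' * l2)"
  have nonzero: "P \<noteq> 0" "H \<noteq> 0" "A * C \<noteq> 0" "E \<noteq> 0"
    using generic unfolding generic_theta_def P_def H_def A_def C_def E_def by auto
  have K2_square: "K2 m1 m2 m3 m4 l1 l2 l3 = W^2 - 4 * P * E * Q m1 m2 m3 m4 l2 l3"
    unfolding K2_def Let_def r1_def r2_def r3_def s1_def s2_def s3_def Q_def
      W_def A_def C_def E_def a'_def c'_def P_def by algebra
  have K4_square: "K4 m1 m2 m3 m4 l1 l2 l3 = W'^2 - 4 * P * E * l1^2 * Q m1 m2 m3 m4 l2 l3"
    unfolding K4_def Let_def r1_def r2_def r3_def s1_def s2_def s3_def Q_def
      W'_def A_def C_def E_def a'_def c'_def P_def by algebra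
  have syzygy: "E * A * C * W' + E^2 * (a' * l3 + c' * l2) * W + E^2 * a' * c' * Q m1 m2 m3 m4 l2 l3
      = E * H * P * l2 * l3"
    unfolding Q_def W_def W'_def A_def C_def E_def a'_def c'_def P_def H_def by algebra
  have Q_split: "Q m1 m2 m3 m4 l2 l3 = E * (l2^2 + l3^2) + (m1^2 + m4^2 - m2^2 - m3^2) * (l2 * l3)"
    unfolding Q_def E_def by algebra
  have "W = 0" "W' = 0"
    using K2 K4 Q K2_square K4_square by simp_all
  then have "l2 * l3 = 0"
    using syzygy Q nonzero by simp
  moreover from this have "E * (l2^2 + l3^2) = 0"
    using Q Q_split by (metis add.right_neutral mult_zero_right)
  ultimately have "l2 = 0" "l3 = 0"
    using nonzero by auto
  then have "A * C * l1 = 0"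
    using \<open>W = 0\<close> unfolding W_def by simp
  then show ?thesis
    using nonzero \<open>l2 = 0\<close> \<open>l3 = 0\<close> by simp
qed

theorem lemma1:
  fixes m1 m2 m3 m4 l1 l2 l3 l4 :: "'a::alg_closed_field"
  assumes char2: "(2::'a) \<noteq> 0" and char3: "(3::'a) \<noteq> 0"
    and mu_nz: "m1 \<noteq> 0" "m2 \<noteq> 0" "m3 \<noteq> 0" "m4 \<noteq> 0"
    and hmu_nz: "hmu1 m1 m2 m3 m4 \<noteq> 0" "hmu2 m1 m2 m3 m4 \<noteq> 0"
                "hmu3 m1 m2 m3 m4 \<noteq> 0" "hmu4 m1 m2 m3 m4 \<noteq> 0"
    and gen: "m1 * m4 \<noteq> m2 * m3" "m1 * m3 \<noteq> m2 * m4" "m1 * m2 \<noteq> m3 * m4"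
    and proj: "(l1, l2, l3, l4) \<noteq> (0, 0, 0, 0)"
    and onK: "on_KTet m1 m2 m3 m4 l1 l2 l3 l4"
  shows "(K2 m1 m2 m3 m4 l1 l2 l3 = 0 \<and> K3 m1 m2 m3 m4 l1 l2 l3 = 0
          \<and> K4 m1 m2 m3 m4 l1 l2 l3 = 0)
         \<longleftrightarrow> (l1 = 0 \<and> l2 = 0 \<and> l3 = 0)"
proof
  assume K: "K2 m1 m2 m3 m4 l1 l2 l3 = 0 \<and> K3 m1 m2 m3 m4 l1 l2 l3 = 0
          \<and> K4 m1 m2 m3 m4 l1 l2 l3 = 0"
  have generic: "generic_theta m1 m2 m3 m4"
    using mu_nz hmu_nz gen
    unfolding generic_theta_def hmu1_def hmu2_def hmu3_def hmu4_def by simp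
  have "(4::'a) \<noteq> 0"
    using char2 power_not_zero[of 2 2] by simp
  then have "Q m1 m2 m3 m4 l2 l3 = 0 \<or> Q m1 m2 m4 m3 l1 l3 = 0 \<or> Q m1 m3 m4 m2 l1 l2 = 0"
    using K3_square_minus_K2_K4[OF char2, of m1 m2 m3 m4 l1 l2 l3] K generic
    unfolding generic_theta_def by simp
  then show "l1 = 0 \<and> l2 = 0 \<and> l3 = 0"
  proof (elim disjE)
    assume "Q m1 m2 m3 m4 l2 l3 = 0"
    then show ?thesis
      using K2_K4_zero_on_Q_imp_zero generic K by blast
  next
    assume "Q m1 m2 m4 m3 l1 l3 = 0"
    then have "l2 = 0 \<and> l1 = 0 \<and> l3 = 0"
      using K2_K4_zero_on_Q_imp_zero[of m1 m2 m4 m3 l2 l1 l3] generic K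
      by (simp add: generic_theta_swap34 K2_swap34 K4_swap34)
    then show ?thesis by blast
  next
    assume "Q m1 m3 m4 m2 l1 l2 = 0"
    then have "l3 = 0 \<and> l1 = 0 \<and> l2 = 0"
      using K2_K4_zero_on_Q_imp_zero[of m1 m3 m4 m2 l3 l1 l2] generic K
      by (simp add: generic_theta_swap23 generic_theta_swap34 K2_swap23 K4_swap23
          K2_swap34 K4_swap34)
    then show ?thesis by blast
  qed
qed (simp add: K2_def K3_def K4_def Let_def)

end
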